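(* For every $\lambda,\lambda'\in\mathbf{R}$ there exists an integer $l\geq 0$ such that for every $f\in\mathcal{C}^{\lambda\text{-an}}(\mathbf{Z}_p^d,M)$, the restriction $f|_{p^l\mathbf{Z}_p^d}$ lies in $\mathcal{C}^{\lambda'\text{-an}}(p^l\mathbf{Z}_p^d,M)$, i.e. the function $\underline{x}\mapsto f(p^l\underline{x})$ lies in $\mathcal{C}^{\lambda'\text{-an}}(\mathbf{Z}_p^d,M)$.
   Context: A valuation on a ring (or module) is a map $\mathrm{val}$ to $(-\infty,\infty]$ with $\mathrm{val}(x)=\infty$ iff $x=0$, $\mathrm{val}(xy)\geq\mathrm{val}(x)+\mathrm{val}(y)$ (for modules: $\mathrm{val}(rm)\geq \mathrm{val}(r)+\mathrm{val}(m)$) and $\mathrm{val}(x+y)\geq\min(\mathrm{val}(x),\mathrm{val}(y))$. Let $R$ be a $\mathbf{Z}_p$-algebra which is a Tate ring with a valuation $\mathrm{val}_R$ such that $\mathrm{val}_R(p)>0$, and let $M$ be an $R$-module with a compatible valuation $\mathrm{val}_M$. For $\underline{y}\in\mathbf{Z}_p^d$ and $f:\mathbf{Z}_p^d\to M$ put $\Delta_{\underline{y}}(f)(\underline{x})=f(\underline{x}+\underline{y})-f(\underline{x})$. Let $1_i$ be the $i$-th standard basis vector, $\Delta_i=\Delta_{1_i}$, $\Delta^{\underline{n}}=\Delta_1^{n_1}\circ\cdots\circ\Delta_d^{n_d}$ for $\underline{n}\in\mathbf{Z}_{\geq0}^d$, and $a_{\underline{n}}(f)=\Delta^{\underline{n}}(f)(\underline{0})$,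 $|\underline{n}|=\sum_i n_i$. Let $\mathcal{C}^{\lambda\text{-an}}(\mathbf{Z}_p^d,M)$ be the set of continuous $f:\mathbf{Z}_p^d\to M$ with $\mathrm{val}_M(a_{\underline{n}}(f))-p^\lambda|\underline{n}|\to\infty$ as $|\underline{n}|\to\infty$. The space $\mathcal{C}^{\lambda'\text{-an}}(p^l\mathbf{Z}_p^d,M)$ is defined by transporting this definition along the homeomorphism $\mathbf{Z}_p^d\to p^l\mathbf{Z}_p^d$, $\underline{x}\mapsto p^l\underline{x}$. *)

theory Defs
  imports "HOL-Analysis.Analysis" "HOL-Library.Extended_Real"
begin

text \<open>An element of Z_p is represented by the sequence of its residues x k in {0..<p^k},
  compatible under reduction.\<close>

definition zp_set :: "nat \<Rightarrow> (nat \<Rightarrow> int) set" where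
  "zp_set p = {x. \<forall>k. 0 \<le> x k \<and> x k < int p ^ k \<and> x k = x (Suc k) mod (int p ^ k)}"

definition zp_of_int :: "nat \<Rightarrow> int \<Rightarrow> (nat \<Rightarrow> int)" where
  "zp_of_int p a = (\<lambda>k. a mod (int p ^ k))"

definition zp_add :: "nat \<Rightarrow> (nat \<Rightarrow> int) \<Rightarrow> (nat \<Rightarrow> int) \<Rightarrow> (nat \<Rightarrow> int)" where
  "zp_add p x y = (\<lambda>k. (x k + y k) mod (int p ^ k))"

definition zp_mul :: "nat \<Rightarrow> (nat \<Rightarrow> int) \<Rightarrow> (nat \<Rightarrow> int) \<Rightarrow> (nat \<Rightarrow> int)" where
  "zp_mul p x y = (\<lambda>k. (x k * y k) mod (int p ^ k))"

definition zpd_set :: "nat \<Rightarrow> nat \<Rightarrow> (nat \<Rightarrow> nat \<Rightarrow> int) set" where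
  "zpd_set p d = {x. (\<forall>i<d. x i \<in> zp_set p) \<and> (\<forall>i\<ge>d. x i = zp_of_int p 0)}"

definition zpd_zero :: "nat \<Rightarrow> (nat \<Rightarrow> nat \<Rightarrow> int)" where
  "zpd_zero p = (\<lambda>i. zp_of_int p 0)"

definition zpd_add :: "nat \<Rightarrow> (nat \<Rightarrow> nat \<Rightarrow> int) \<Rightarrow> (nat \<Rightarrow> nat \<Rightarrow> int) \<Rightarrow> (nat \<Rightarrow> nat \<Rightarrow> int)" where
  "zpd_add p x y = (\<lambda>i. zp_add p (x i) (y i))"

definition zpd_basis :: "nat \<Rightarrow> nat \<Rightarrow> (nat \<Rightarrow> nat \<Rightarrow> int)" where
  "zpd_basis p i = (\<lambda>j. if j = i then zp_of_int p 1 else zp_of_int p 0)"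

definition zpd_scale :: "nat \<Rightarrow> nat \<Rightarrow> (nat \<Rightarrow> nat \<Rightarrow> int) \<Rightarrow> (nat \<Rightarrow> nat \<Rightarrow> int)" where
  "zpd_scale p l x = (\<lambda>i. zp_mul p (zp_of_int p (int p ^ l)) (x i))"

definition ring_valuation :: "('r::comm_ring_1 \<Rightarrow> ereal) \<Rightarrow> bool" where
  "ring_valuation v \<longleftrightarrow>
     (\<forall>x. v x \<noteq> -\<infinity>) \<and> (\<forall>x. v x = \<infinity> \<longleftrightarrow> x = 0) \<and>
     (\<forall>x y. v (x * y) \<ge> v x + v y) \<and> (\<forall>x y. v (x + y) \<ge> min (v x) (v y))"

definition module_valuation ::
  "('r::comm_ring_1 \<Rightarrow> ereal) \<Rightarrow> ('r \<Rightarrow> 'm::ab_group_add \<Rightarrow> 'm) \<Rightarrow> ('m \<Rightarrow> ereal) \<Rightarrow> bool" where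
  "module_valuation vR sm vM \<longleftrightarrow>
     (\<forall>x. vM x \<noteq> -\<infinity>) \<and> (\<forall>x. vM x = \<infinity> \<longleftrightarrow> x = 0) \<and>
     (\<forall>r m. vM (sm r m) \<ge> vR r + vM m) \<and> (\<forall>x y. vM (x + y) \<ge> min (vM x) (vM y))"

definition zp_algebra :: "nat \<Rightarrow> ((nat \<Rightarrow> int) \<Rightarrow> 'r::comm_ring_1) \<Rightarrow> bool" where
  "zp_algebra p \<iota> \<longleftrightarrow>
     \<iota> (zp_of_int p 1) = 1 \<and>
     (\<forall>x\<in>zp_set p. \<forall>y\<in>zp_set p. \<iota> (zp_add p x y) = \<iota> x + \<iota> y \<and> \<iota> (zp_mul p x y) = \<iota> x * \<iota> y)"

text \<open>Tate ring (topology given by the valuation): R has a topologically nilpotent unit.\<close>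
definition tate_ring :: "('r::comm_ring_1 \<Rightarrow> ereal) \<Rightarrow> bool" where
  "tate_ring v \<longleftrightarrow> (\<exists>u. u dvd 1 \<and> v u > 0)"

text \<open>Continuity of f : Z_p^d \<rightarrow> M (only values on Z_p^d matter), M topologised by its valuation.\<close>
definition zpd_continuous :: "nat \<Rightarrow> nat \<Rightarrow> ('m::ab_group_add \<Rightarrow> ereal) \<Rightarrow> ((nat \<Rightarrow> nat \<Rightarrow> int) \<Rightarrow> 'm) \<Rightarrow> bool" where
  "zpd_continuous p d vM f \<longleftrightarrow>
     (\<forall>x\<in>zpd_set p d. \<forall>C::real. \<exists>n. \<forall>y\<in>zpd_set p d.
        (\<forall>i<d. y i n = x i n) \<longrightarrow> vM (f y - f x) \<ge> ereal C)"

definition zpd_Delta :: "nat \<Rightarrow> (nat \<Rightarrow> nat \<Rightarrow> int) \<Rightarrow> ((nat \<Rightarrow> nat \<Rightarrow> int) \<Rightarrow> 'm::ab_group_add)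
    \<Rightarrow> ((nat \<Rightarrow> nat \<Rightarrow> int) \<Rightarrow> 'm)" where
  "zpd_Delta p y f = (\<lambda>x. f (zpd_add p x y) - f x)"

text \<open>\<Delta>^n = \<Delta>_1^{n_1} \<circ> ... \<circ> \<Delta>_d^{n_d} (coordinates indexed 0..d-1).\<close>
definition zpd_Delta_multi :: "nat \<Rightarrow> nat \<Rightarrow> (nat \<Rightarrow> nat) \<Rightarrow> ((nat \<Rightarrow> nat \<Rightarrow> int) \<Rightarrow> 'm::ab_group_add)
    \<Rightarrow> ((nat \<Rightarrow> nat \<Rightarrow> int) \<Rightarrow> 'm)" where
  "zpd_Delta_multi p d n = foldr (\<lambda>i g. (zpd_Delta p (zpd_basis p i) ^^ n i) \<circ> g) [0..<d] id"

definition mahler_coeff :: "nat \<Rightarrow> nat \<Rightarrow> ((nat \<Rightarrow> nat \<Rightarrow> int) \<Rightarrow> 'm::ab_group_add) \<Rightarrow> (nat \<Rightarrow> nat) \<Rightarrow> 'm" where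
  "mahler_coeff p d f n = zpd_Delta_multi p d n f (zpd_zero p)"

definition multi_indices :: "nat \<Rightarrow> (nat \<Rightarrow> nat) set" where
  "multi_indices d = {n. \<forall>i\<ge>d. n i = 0}"

definition multi_abs :: "nat \<Rightarrow> (nat \<Rightarrow> nat) \<Rightarrow> nat" where
  "multi_abs d n = (\<Sum>i<d. n i)"

definition C_an :: "nat \<Rightarrow> nat \<Rightarrow> ('m::ab_group_add \<Rightarrow> ereal) \<Rightarrow> real
    \<Rightarrow> ((nat \<Rightarrow> nat \<Rightarrow> int) \<Rightarrow> 'm) set" where
  "C_an p d vM lam = {f. zpd_continuous p d vM f \<and>
     (\<forall>C::real. \<exists>N. \<forall>n\<in>multi_indices d. multi_abs d n \<ge> N \<longrightarrow>
        vM (mahler_coeff p d f n) - ereal (real p powr lam * real (multi_abs d n)) \<ge> ereal C)}"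

end

theory Submission
  imports Defs "HOL-Computational_Algebra.Primes"
begin

text \<open>Restricted to the lattice points \<open>k \<in> \<nat>\<^sup>d\<close> of \<open>\<int>\<^sub>p\<^sup>d\<close>, the Mahler coefficients of \<open>f\<close> are
  the iterated forward differences at \<open>0\<close> of \<open>\<phi> k = f k\<close>, and those of \<open>g x = f (p\<^sup>l x)\<close> are iterated
  differences of \<open>\<phi>\<close> with step \<open>q = p\<^sup>l\<close>. By Newton's formula a step-\<open>q\<close> difference is
  \<open>\<Sum>j=1..q. (q choose j) \<Delta>\<^sup>j\<close>, and \<open>p\<^bsup>l - v\<^sub>p(j)\<^esup>\<close> divides \<open>q choose j\<close>, so for any prescribed \<open>K\<close>
  we get \<open>val (q choose j) \<ge> K - p\<^sup>\<lambda> j\<close> once \<open>l\<close> is large. Hence every step-\<open>q\<close> difference raises a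
  lower bound \<open>c + p\<^sup>\<lambda> |m|\<close> for the coefficients by \<open>K\<close>, the coefficients of \<open>g\<close> are bounded below by
  \<open>c + K |n|\<close>, and \<open>g\<close> is \<open>\<lambda>'\<close>-analytic as soon as \<open>K > p\<^bsup>\<lambda>'\<^esup>\<close>.\<close>

subsection \<open>Binomial coefficients of prime powers\<close>

lemma prime_power_dvd_binomial:
  fixes p n j :: nat
  assumes "prime p" and "0 < j"
  shows "p ^ (multiplicity p n - multiplicity p j) dvd (n choose j)"
proof -
  define a where "a = multiplicity p n"
  define t where "t = multiplicity p j"
  obtain u where j: "j = p ^ t * u" and u: "\<not> p dvd u"
    using multiplicity_decompose'[of j p] assms not_prime_unit unfolding t_def by blast
  obtain k where k: "j = Suc k" using assms(2) gr0_implies_Suc by blast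
  have "j * (n choose j) = n * ((n - 1) choose k)"
    using binomial_absorption[of k n] k by simp
  then have "p ^ a dvd p ^ t * (u * (n choose j))"
    using multiplicity_dvd[of p n] j unfolding a_def by (metis dvd_mult2 mult.assoc)
  then have "p ^ t * p ^ (a - t) dvd p ^ t * (u * (n choose j))"
    by (cases "t \<le> a") (simp_all add: power_add[symmetric])
  then have "p ^ (a - t) dvd u * (n choose j)"
    using prime_gt_0_nat[OF assms(1)] by (simp add: nat_mult_dvd_cancel_disj)
  moreover have "coprime (p ^ (a - t)) u"
    using u assms(1) by (simp add: prime_imp_coprime coprime_power_left_iff)
  ultimately show ?thesis
    unfolding a_def t_def using coprime_dvd_mult_right_iff by blast
qed

lemma multiplicity_le_self:
  fixes p j :: nat
  assumes "prime p"
  shows "multiplicity p j \<le> j"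
proof (cases "j = 0")
  case False
  have "multiplicity p j < 2 ^ multiplicity p j" by (rule less_exp)
  also have "\<dots> \<le> p ^ multiplicity p j"
    using prime_ge_2_nat[OF assms] by (intro power_mono) auto
  also have "\<dots> \<le> j" using False by (intro dvd_imp_le multiplicity_dvd) auto
  finally show ?thesis by simp
qed simp

subsection \<open>Valuations\<close>

lemma ring_valuation_of_nat_lower_bound:
  assumes "ring_valuation vR"
  obtains b :: real where "\<And>n. ereal b \<le> vR (of_nat n)"
proof -
  define b where "b = (if vR 1 = \<infinity> then 0 else real_of_ereal (vR 1))"
  have "vR 1 \<noteq> -\<infinity>" using assms unfolding ring_valuation_def by blast
  then have b1: "ereal b \<le> vR 1" unfolding b_def by (cases "vR 1") auto
  have "ereal b \<le> vR (of_nat n)" for n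
  proof (induction n)
    case 0
    have "vR 0 = \<infinity>" using assms unfolding ring_valuation_def by blast
    then show ?case by simp
  next
    case (Suc n)
    have "ereal b \<le> min (vR 1) (vR (of_nat n))" using Suc b1 by simp
    also have "\<dots> \<le> vR (1 + of_nat n)" using assms unfolding ring_valuation_def by blast
    finally show ?case by simp
  qed
  then show ?thesis using that by blast
qed

lemma ring_valuation_power_mult:
  assumes "ring_valuation vR" and "ereal v \<le> vR x" and "ereal b \<le> vR y"
  shows "ereal (real a * v + b) \<le> vR (x ^ a * y)"
proof (induction a)
  case 0
  then show ?case using assms(3) by simp
next
  case (Suc a)
  have "ereal (real (Suc a) * v + b) = ereal v + ereal (real a * v + b)"
    by (simp add: algebra_simps)
  also have "\<dots> \<le> vR x + vR (x ^ a * y)" using Suc assms(2) by (intro add_mono)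
  also have "\<dots> \<le> vR (x * (x ^ a * y))" using assms(1) unfolding ring_valuation_def by blast
  finally show ?case by (simp add: mult.assoc)
qed

text \<open>Here \<open>val (p\<^sup>l choose j) \<ge> (l - v\<^sub>p(j)) v + b\<close> for any \<open>0 < v < val p\<close> and a lower bound \<open>b\<close>
  of \<open>val\<close> on \<open>\<nat>\<close>; the loss \<open>v\<^sub>p(j) \<le> j\<close> is absorbed by the slope \<open>s\<close>.\<close>

lemma binomial_prime_power_valuation_lower_bound:
  fixes vR :: "'r::comm_ring_1 \<Rightarrow> ereal"
  assumes "ring_valuation vR" and "prime p" and "vR (of_nat p) > 0" and "s > 0"
  obtains l where "\<And>j. 0 < j \<Longrightarrow> ereal (K - s * real j) \<le> vR (of_nat (p ^ l choose j))"
proof -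
  obtain v where v: "0 < ereal v" "ereal v < vR (of_nat p)"
    using ereal_dense2[OF assms(3)] by blast
  obtain b where b: "\<And>n. ereal b \<le> vR (of_nat n)"
    using ring_valuation_of_nat_lower_bound[OF assms(1)] by blast
  define \<mu> where "\<mu> = min v s"
  have \<mu>: "\<mu> > 0" "\<mu> \<le> v" "\<mu> \<le> s" unfolding \<mu>_def using v(1) assms(4) by auto
  define l where "l = nat \<lceil>(K - b) / \<mu>\<rceil>"
  have "(K - b) / \<mu> \<le> real l" unfolding l_def by linarith
  then have l: "K - b \<le> real l * \<mu>" using \<mu>(1) by (simp add: field_simps)
  have "ereal (K - s * real j) \<le> vR (of_nat (p ^ l choose j))" if j: "0 < j" for j
  proof -
    define t where "t = multiplicity p j"
    obtain c where c: "p ^ l choose j = p ^ (l - t) * c"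
      using prime_power_dvd_binomial[OF assms(2) j, of "p ^ l"] assms(2)
      unfolding t_def by (auto elim: dvdE)
    have "real t * \<mu> \<le> s * real j"
      using multiplicity_le_self[OF assms(2), of j] \<mu> unfolding t_def
      by (metis mult.commute mult_mono of_nat_0_le_iff of_nat_mono less_imp_le)
    moreover have "(real l - real t) * \<mu> \<le> real (l - t) * v"
      using \<mu> by (intro mult_mono) auto
    ultimately have "K - s * real j \<le> real (l - t) * v + b"
      using l by (simp add: algebra_simps)
    also have "ereal \<dots> \<le> vR (of_nat p ^ (l - t) * of_nat c)"
      using v b by (intro ring_valuation_power_mult[OF assms(1)]) auto
    finally show ?thesis unfolding c by simp
  qed
  then show ?thesis using that by blast
qed

lemma ereal_finite_lower_bound:
  assumes "finite S" and "\<And>m. m \<in> S \<Longrightarrow> g m \<noteq> -\<infinity>"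
  obtains c :: real where "\<And>m. m \<in> S \<Longrightarrow> ereal c \<le> g m"
proof -
  define c where "c = Min (insert 0 (real_of_ereal ` g ` S))"
  have "ereal c \<le> g m" if m: "m \<in> S" for m
  proof -
    have "c \<le> real_of_ereal (g m)" unfolding c_def using assms(1) m by (intro Min_le) auto
    then show ?thesis using assms(2)[OF m] by (cases "g m") auto
  qed
  then show ?thesis using that by blast
qed

lemma C_an_linear_lower_bound:
  assumes "\<And>x. vM x \<noteq> -\<infinity>" and "f \<in> C_an p d vM lam"
  obtains c :: real where "\<And>m. m \<in> multi_indices d \<Longrightarrow>
    ereal (c + real p powr lam * real (multi_abs d m)) \<le> vM (mahler_coeff p d f m)"
proof -
  define g where "g m = vM (mahler_coeff p d f m) - ereal (real p powr lam * real (multi_abs d m))" for m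
  obtain N where N: "\<And>m. m \<in> multi_indices d \<Longrightarrow> N \<le> multi_abs d m \<Longrightarrow> ereal 0 \<le> g m"
    using assms(2) unfolding C_an_def g_def by blast
  define S where "S = {m. \<forall>i. (i \<in> {..<d} \<longrightarrow> m i \<in> {..<N}) \<and> (i \<notin> {..<d} \<longrightarrow> m i = 0)}"
  have "finite S" unfolding S_def by (rule finite_set_of_finite_funs) auto
  moreover have "g m \<noteq> -\<infinity>" for m
    using assms(1)[of "mahler_coeff p d f m"] unfolding g_def by (cases "vM (mahler_coeff p d f m)") auto
  ultimately obtain c where c: "\<And>m. m \<in> S \<Longrightarrow> ereal c \<le> g m"
    using ereal_finite_lower_bound[of S g] by blast
  have g_bound: "ereal (min c 0) \<le> g m" if m: "m \<in> multi_indices d" for m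
  proof (cases "N \<le> multi_abs d m")
    case True
    then show ?thesis using N[OF m] by (meson min.cobounded2 ereal_less_eq(3) order_trans)
  next
    case False
    have "m i < N" if "i < d" for i
      using False member_le_sum[of i "{..<d}" m] that unfolding multi_abs_def by auto
    then have "m \<in> S" using m unfolding S_def multi_indices_def by auto
    then show ?thesis using c by (meson min.cobounded1 ereal_less_eq(3) order_trans)
  qed
  have "ereal (min c 0 + real p powr lam * real (multi_abs d m)) \<le> vM (mahler_coeff p d f m)"
    if "m \<in> multi_indices d" for m
    using g_bound[OF that] unfolding g_def
    by (cases "vM (mahler_coeff p d f m)") (auto simp: min_def split: if_splits)
  then show ?thesis using that by blast
qed

lemma C_an_if_linear_lower_bound:
  assumes "zpd_continuous p d vM f"
    and "\<And>n. n \<in> multi_indices d \<Longrightarrow> ereal (c + K * real (multi_abs d n)) \<le> vM (mahler_coeff p d f n)"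
    and "real p powr lam < K"
  shows "f \<in> C_an p d vM lam"
  unfolding C_an_def mem_Collect_eq
proof (intro conjI assms(1) allI)
  fix C :: real
  let ?s = "real p powr lam"
  define N where "N = nat \<lceil>(C - c) / (K - ?s)\<rceil>"
  have "ereal C \<le> vM (mahler_coeff p d f n) - ereal (?s * real (multi_abs d n))"
    if n: "n \<in> multi_indices d" "N \<le> multi_abs d n" for n
  proof -
    have "(C - c) / (K - ?s) \<le> real (multi_abs d n)" using n(2) unfolding N_def by linarith
    then have "C \<le> c + K * real (multi_abs d n) - ?s * real (multi_abs d n)"
      using assms(3) by (simp add: field_simps)
    then have "ereal C \<le> ereal (c + K * real (multi_abs d n)) - ereal (?s * real (multi_abs d n))"
      by simp
    also have "\<dots> \<le> vM (mahler_coeff p d f n) - ereal (?s * real (multi_abs d n))"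
      using assms(2)[OF n(1)] by (rule ereal_minus_mono) simp
    finally show ?thesis .
  qed
  then show "\<exists>N. \<forall>n\<in>multi_indices d. N \<le> multi_abs d n \<longrightarrow>
      ereal C \<le> vM (mahler_coeff p d f n) - ereal (?s * real (multi_abs d n))"
    by blast
qed

subsection \<open>Finite differences on \<open>\<nat>\<^sup>I\<close>\<close>

definition fdiff :: "'i \<Rightarrow> (('i \<Rightarrow> nat) \<Rightarrow> 'm::ab_group_add) \<Rightarrow> ('i \<Rightarrow> nat) \<Rightarrow> 'm" where
  "fdiff i \<phi> = (\<lambda>k. \<phi> (k(i := Suc (k i))) - \<phi> k)"

definition fdiff_step :: "nat \<Rightarrow> 'i \<Rightarrow> (('i \<Rightarrow> nat) \<Rightarrow> 'm::ab_group_add) \<Rightarrow> ('i \<Rightarrow> nat) \<Rightarrow> 'm" where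
  "fdiff_step q i \<phi> = (\<lambda>k. \<phi> (k(i := k i + q)) - \<phi> k)"

text \<open>The shape of \<^const>\<open>zpd_Delta_multi\<close>, for an arbitrary family of operators.\<close>

definition multi_iter :: "('i \<Rightarrow> 'a \<Rightarrow> 'a) \<Rightarrow> 'i list \<Rightarrow> ('i \<Rightarrow> nat) \<Rightarrow> 'a \<Rightarrow> 'a" where
  "multi_iter A xs n = foldr (\<lambda>i g. (A i ^^ n i) \<circ> g) xs id"

lemma multi_iter_Nil [simp]: "multi_iter A [] n h = h"
  by (simp add: multi_iter_def)

lemma multi_iter_Cons [simp]: "multi_iter A (x # xs) n h = (A x ^^ n x) (multi_iter A xs n h)"
  by (simp add: multi_iter_def)

lemma multi_iter_zero [simp]: "multi_iter A xs (\<lambda>_. 0) h = h"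
  by (induction xs) auto

lemma multi_iter_rel:
  assumes "\<And>i h w. i \<in> set xs \<Longrightarrow> R h w \<Longrightarrow> R (A i h) (B i w)" and "R h w"
  shows "R (multi_iter A xs n h) (multi_iter B xs n w)"
  using assms
proof (induction xs arbitrary: h w)
  case (Cons x xs)
  have funpow: "R ((A x ^^ r) h') ((B x ^^ r) w')" if "R h' w'" for r h' w'
    using that Cons.prems(1) by (induction r) auto
  show ?case using Cons by (simp add: funpow)
qed simp

lemma funpow_commute:
  assumes "\<And>x. A (B x) = B (A x)"
  shows "(A ^^ r) ((B ^^ s) x) = (B ^^ s) ((A ^^ r) x)"
proof -
  have "A ((B ^^ s) x) = (B ^^ s) (A x)" for x
    by (induction s) (auto simp: assms)
  then show ?thesis by (induction r) auto
qed

lemma multi_iter_upd_notin: "i \<notin> set xs \<Longrightarrow> multi_iter A xs (n(i := v)) h = multi_iter A xs n h"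
  by (induction xs) auto

lemma multi_iter_funpow_commute:
  assumes "\<And>a b x. A a (A b x) = A b (A a x)"
  shows "multi_iter A xs n ((A i ^^ j) h) = (A i ^^ j) (multi_iter A xs n h)"
  by (induction xs) (simp_all add: funpow_commute assms)

lemma multi_iter_upd_add:
  assumes "\<And>a b x. A a (A b x) = A b (A a x)" and "distinct xs" and "i \<in> set xs"
  shows "multi_iter A xs (n(i := n i + j)) h = multi_iter A xs n ((A i ^^ j) h)"
  using assms(2,3)
proof (induction xs)
  case (Cons x xs)
  show ?case
  proof (cases "x = i")
    case True
    then have "multi_iter A xs (n(i := n i + j)) h = multi_iter A xs n h"
      using Cons.prems by (intro multi_iter_upd_notin) auto
    then show ?thesis
      using True
      by (simp add: funpow_add multi_iter_funpow_commute[where A=A, OF assms(1)] fun_upd_same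
          del: fun_upd_apply)
  next
    case False
    then show ?thesis using Cons by (simp add: multi_iter_funpow_commute[where A=A, OF assms(1)])
  qed
qed simp

lemma fdiff_commute: "fdiff a (fdiff b \<phi>) = fdiff b (fdiff a \<phi>)"
  unfolding fdiff_def by (cases "a = b") (auto simp: fun_upd_twist algebra_simps)

text \<open>Index sets of type \<^typ>\<open>nat\<close> suffice for the linear combinations needed here.\<close>

definition linear_op :: "('r::comm_ring_1 \<Rightarrow> 'm::ab_group_add \<Rightarrow> 'm) \<Rightarrow> (('k \<Rightarrow> 'm) \<Rightarrow> 'k \<Rightarrow> 'm) \<Rightarrow> bool" where
  "linear_op sm T \<longleftrightarrow>
     (\<forall>(J::nat set) c \<rho>. T (\<lambda>k. \<Sum>j\<in>J. sm (c j) (\<rho> j k)) = (\<lambda>k. \<Sum>j\<in>J. sm (c j) (T (\<rho> j) k)))"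

lemma linear_op_fdiff: "module sm \<Longrightarrow> linear_op sm (fdiff i)"
  unfolding linear_op_def fdiff_def by (auto simp: sum_subtractf module.scale_right_diff_distrib)

lemma linear_op_funpow: "linear_op sm T \<Longrightarrow> linear_op sm (T ^^ r)"
  by (induction r) (auto simp: linear_op_def)

lemma linear_op_multi_iter: "(\<And>i. linear_op sm (A i)) \<Longrightarrow> linear_op sm (multi_iter A xs n)"
proof (induction xs)
  case Nil
  then show ?case by (simp add: linear_op_def)
next
  case (Cons x xs)
  then have "linear_op sm (A x ^^ n x)" "linear_op sm (multi_iter A xs n)"
    using linear_op_funpow by blast+
  then show ?case unfolding linear_op_def multi_iter_Cons by simp
qed

lemma module_pascal_sum:
  assumes "module sm"
  shows "(\<Sum>j\<le>Q. sm (of_nat (Q choose j)) (a (Suc j) + a j)) =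
         (\<Sum>j\<le>Suc Q. sm (of_nat (Suc Q choose j)) (a j))"
proof -
  interpret module sm by (rule assms)
  have "(\<Sum>j\<le>Q. sm (of_nat (Q choose j)) (a j)) = (\<Sum>j\<le>Suc Q. sm (of_nat (Q choose j)) (a j))"
    by (simp add: binomial_eq_0)
  also have "\<dots> = a 0 + (\<Sum>j\<le>Q. sm (of_nat (Q choose Suc j)) (a (Suc j)))"
    by (subst sum.atMost_Suc_shift) simp
  finally have lower: "(\<Sum>j\<le>Q. sm (of_nat (Q choose j)) (a j)) =
      a 0 + (\<Sum>j\<le>Q. sm (of_nat (Q choose Suc j)) (a (Suc j)))" .
  have "(\<Sum>j\<le>Suc Q. sm (of_nat (Suc Q choose j)) (a j)) =
      a 0 + (\<Sum>j\<le>Q. sm (of_nat (Q choose j)) (a (Suc j)) + sm (of_nat (Q choose Suc j)) (a (Suc j)))"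
    by (subst sum.atMost_Suc_shift) (simp add: scale_left_distrib)
  also have "\<dots> = (\<Sum>j\<le>Q. sm (of_nat (Q choose j)) (a (Suc j))) + (\<Sum>j\<le>Q. sm (of_nat (Q choose j)) (a j))"
    by (simp add: lower sum.distrib algebra_simps)
  also have "\<dots> = (\<Sum>j\<le>Q. sm (of_nat (Q choose j)) (a (Suc j) + a j))"
    by (simp add: scale_right_distrib sum.distrib)
  finally show ?thesis ..
qed

lemma shift_eq_sum_binomial_fdiff:
  assumes "module sm"
  shows "\<phi> (k(i := k i + Q)) = (\<Sum>j\<le>Q. sm (of_nat (Q choose j)) ((fdiff i ^^ j) \<phi> k))"
proof (induction Q arbitrary: k)
  case 0
  then show ?case using module.scale_one[OF assms] by simp
next
  case (Suc Q)
  define k' where "k' = k(i := Suc (k i))"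
  have "\<phi> (k(i := k i + Suc Q)) = \<phi> (k'(i := k' i + Q))" unfolding k'_def by simp
  also have "\<dots> = (\<Sum>j\<le>Q. sm (of_nat (Q choose j)) ((fdiff i ^^ Suc j) \<phi> k + (fdiff i ^^ j) \<phi> k))"
    unfolding Suc by (simp add: fdiff_def k'_def)
  also have "\<dots> = (\<Sum>j\<le>Suc Q. sm (of_nat (Suc Q choose j)) ((fdiff i ^^ j) \<phi> k))"
    by (rule module_pascal_sum[OF assms])
  finally show ?case .
qed

lemma fdiff_step_eq_sum_binomial_fdiff:
  assumes "module sm"
  shows "fdiff_step q i \<phi> = (\<lambda>k. \<Sum>j\<in>{1..q}. sm (of_nat (q choose j)) ((fdiff i ^^ j) \<phi> k))"
proof
  fix k
  have "\<phi> (k(i := k i + q)) = (\<Sum>j\<in>{0..q}. sm (of_nat (q choose j)) ((fdiff i ^^ j) \<phi> k))"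
    using shift_eq_sum_binomial_fdiff[OF assms] by (simp add: atMost_atLeast0)
  also have "\<dots> = \<phi> k + (\<Sum>j\<in>{1..q}. sm (of_nat (q choose j)) ((fdiff i ^^ j) \<phi> k))"
    using module.scale_one[OF assms] by (subst sum.atLeast_Suc_atMost) auto
  finally show "fdiff_step q i \<phi> k = (\<Sum>j\<in>{1..q}. sm (of_nat (q choose j)) ((fdiff i ^^ j) \<phi> k))"
    unfolding fdiff_step_def by (simp add: algebra_simps)
qed

subsection \<open>Lower bounds for iterated differences\<close>

lemma module_valuation_sum_lower_bound:
  assumes "module_valuation vR sm vM" and "\<And>j. j \<in> J \<Longrightarrow> L \<le> vM (g j)"
  shows "L \<le> vM (sum g J)"
proof -
  have zero: "vM 0 = \<infinity>" using assms(1) unfolding module_valuation_def by blast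
  show ?thesis
    using assms(2)
  proof (induction J rule: infinite_finite_induct)
    case (insert x F)
    then have "L \<le> min (vM (g x)) (vM (sum g F))" by simp
    also have "\<dots> \<le> vM (g x + sum g F)" using assms(1) by (simp add: module_valuation_def)
    finally show ?case using insert by simp
  qed (simp_all add: zero)
qed

lemma multi_abs_upd_add:
  assumes "i < d"
  shows "multi_abs d (m(i := m i + j)) = multi_abs d m + j"
proof -
  have "(\<Sum>x<d. (m(i := m i + j)) x) = (\<Sum>x<d. m x + (if x = i then j else 0))"
    by (rule sum.cong) auto
  then show ?thesis using assms by (simp add: multi_abs_def sum.distrib)
qed

lemma multi_indices_upd_add: "m \<in> multi_indices d \<Longrightarrow> i < d \<Longrightarrow> m(i := m i + j) \<in> multi_indices d"
  by (auto simp: multi_indices_def)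

definition lattice_coeff :: "nat \<Rightarrow> ((nat \<Rightarrow> nat) \<Rightarrow> 'm::ab_group_add) \<Rightarrow> (nat \<Rightarrow> nat) \<Rightarrow> 'm" where
  "lattice_coeff d w m = multi_iter fdiff [0..<d] m w (\<lambda>_. 0)"

lemma lattice_coeff_fdiff_step_eq:
  assumes "module sm" and "i < d"
  shows "lattice_coeff d (fdiff_step q i w) m =
    (\<Sum>j\<in>{1..q}. sm (of_nat (q choose j)) (lattice_coeff d w (m(i := m i + j))))"
proof -
  have "linear_op sm (multi_iter fdiff [0..<d] m)"
    by (intro linear_op_multi_iter linear_op_fdiff assms(1))
  then have "lattice_coeff d (fdiff_step q i w) m =
      (\<Sum>j\<in>{1..q}. sm (of_nat (q choose j)) (multi_iter fdiff [0..<d] m ((fdiff i ^^ j) w) (\<lambda>_. 0)))"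
    unfolding lattice_coeff_def fdiff_step_eq_sum_binomial_fdiff[OF assms(1)] linear_op_def by metis
  also have "\<dots> = (\<Sum>j\<in>{1..q}. sm (of_nat (q choose j)) (lattice_coeff d w (m(i := m i + j))))"
    unfolding lattice_coeff_def using assms(2)
    by (subst multi_iter_upd_add[where A = fdiff]) (auto simp: fdiff_commute)
  finally show ?thesis .
qed

lemma lattice_coeff_fdiff_step_lower_bound:
  assumes "module sm" and "module_valuation vR sm vM" and "i < d"
    and "\<And>j. 0 < j \<Longrightarrow> ereal (K - s * real j) \<le> vR (of_nat (q choose j))"
    and "\<And>m. m \<in> multi_indices d \<Longrightarrow> ereal (c + s * real (multi_abs d m)) \<le> vM (lattice_coeff d w m)"
    and m: "m \<in> multi_indices d"
  shows "ereal (c + K + s * real (multi_abs d m)) \<le> vM (lattice_coeff d (fdiff_step q i w) m)"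
  unfolding lattice_coeff_fdiff_step_eq[OF assms(1,3)]
proof (rule module_valuation_sum_lower_bound[OF assms(2)])
  fix j assume j: "j \<in> {1..q}"
  let ?m' = "m(i := m i + j)"
  have "ereal (c + K + s * real (multi_abs d m)) = ereal (K - s * real j) + ereal (c + s * real (multi_abs d ?m'))"
    unfolding multi_abs_upd_add[OF assms(3)] by (simp add: algebra_simps)
  also have "\<dots> \<le> vR (of_nat (q choose j)) + vM (lattice_coeff d w ?m')"
    using j by (intro add_mono assms(4) assms(5) multi_indices_upd_add m assms(3)) auto
  also have "\<dots> \<le> vM (sm (of_nat (q choose j)) (lattice_coeff d w ?m'))"
    using assms(2) by (simp add: module_valuation_def)
  finally show "ereal (c + K + s * real (multi_abs d m)) \<le> vM (sm (of_nat (q choose j)) (lattice_coeff d w ?m'))" .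
qed

lemma lattice_coeff_multi_iter_lower_bound:
  assumes "module sm" and "module_valuation vR sm vM"
    and "\<And>j. 0 < j \<Longrightarrow> ereal (K - s * real j) \<le> vR (of_nat (q choose j))"
    and "set xs \<subseteq> {..<d}"
    and "\<And>m. m \<in> multi_indices d \<Longrightarrow> ereal (c + s * real (multi_abs d m)) \<le> vM (lattice_coeff d w m)"
    and "m \<in> multi_indices d"
  shows "ereal (c + K * real (sum_list (map n xs)) + s * real (multi_abs d m))
    \<le> vM (lattice_coeff d (multi_iter (fdiff_step q) xs n w) m)"
  using assms(4-6)
proof (induction xs arbitrary: m)
  case (Cons x xs)
  let ?c = "c + K * real (sum_list (map n xs))"
  have "ereal (?c + K * real r + s * real (multi_abs d m))
    \<le> vM (lattice_coeff d ((fdiff_step q x ^^ r) (multi_iter (fdiff_step q) xs n w)) m)"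
    if "m \<in> multi_indices d" for r m
    using that
  proof (induction r arbitrary: m)
    case (Suc r)
    have "ereal ((?c + K * real r) + K + s * real (multi_abs d m))
      \<le> vM (lattice_coeff d (fdiff_step q x ((fdiff_step q x ^^ r) (multi_iter (fdiff_step q) xs n w))) m)"
      using Cons.prems(1) Suc by (intro lattice_coeff_fdiff_step_lower_bound[OF assms(1,2) _ assms(3)]) auto
    then show ?case by (simp add: algebra_simps)
  qed (use Cons in auto)
  from this[OF Cons.prems(3), of "n x"] show ?case by (simp add: algebra_simps)
qed simp

subsection \<open>Lattice points of \<open>\<int>\<^sub>p\<^sup>d\<close>\<close>

definition lattice_point :: "nat \<Rightarrow> nat \<Rightarrow> (nat \<Rightarrow> nat) \<Rightarrow> nat \<Rightarrow> nat \<Rightarrow> int" where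
  "lattice_point p d k = (\<lambda>i. if i < d then zp_of_int p (int (k i)) else zp_of_int p 0)"

lemma zpd_add_lattice_point_basis:
  "i < d \<Longrightarrow> zpd_add p (lattice_point p d k) (zpd_basis p i) = lattice_point p d (k(i := Suc (k i)))"
  by (auto simp: fun_eq_iff zpd_add_def lattice_point_def zpd_basis_def zp_add_def zp_of_int_def
      mod_add_eq add.commute)

lemma lattice_point_zero: "lattice_point p d (\<lambda>_. 0) = zpd_zero p"
  by (auto simp: fun_eq_iff lattice_point_def zpd_zero_def)

lemma zpd_scale_lattice_point: "zpd_scale p l (lattice_point p d k) = lattice_point p d (\<lambda>i. p ^ l * k i)"
  by (auto simp: fun_eq_iff lattice_point_def zpd_scale_def zp_mul_def zp_of_int_def mod_mult_eq)

lemma mahler_coeff_eq_lattice_coeff: "mahler_coeff p d f n = lattice_coeff d (\<lambda>k. f (lattice_point p d k)) n"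
proof -
  have "\<forall>k. multi_iter (\<lambda>i. zpd_Delta p (zpd_basis p i)) [0..<d] n f (lattice_point p d k)
      = multi_iter fdiff [0..<d] n (\<lambda>k. f (lattice_point p d k)) k"
    by (rule multi_iter_rel[where R = "\<lambda>h w. \<forall>k. h (lattice_point p d k) = w k"])
      (simp_all add: zpd_Delta_def fdiff_def zpd_add_lattice_point_basis)
  then show ?thesis
    unfolding mahler_coeff_def lattice_coeff_def zpd_Delta_multi_def multi_iter_def[symmetric]
    by (metis lattice_point_zero)
qed

lemma lattice_coeff_scale:
  "lattice_coeff d (\<lambda>k. w (\<lambda>i. q * k i)) n = multi_iter (fdiff_step q) [0..<d] n w (\<lambda>_. 0)"
proof -
  have "(\<lambda>j. q * (k(i := Suc (k i))) j) = (\<lambda>j. q * k j)(i := q * k i + q)" for k :: "nat \<Rightarrow> nat" and i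
    by (auto simp: fun_eq_iff)
  then have "\<forall>k. multi_iter fdiff [0..<d] n (\<lambda>k. w (\<lambda>i. q * k i)) k
      = multi_iter (fdiff_step q) [0..<d] n w (\<lambda>i. q * k i)"
    by (intro multi_iter_rel[where R = "\<lambda>h w. \<forall>k. h k = w (\<lambda>i. q * k i)"])
      (simp_all add: fdiff_def fdiff_step_def)
  then show ?thesis unfolding lattice_coeff_def by simp
qed

lemma zp_mul_of_int_in_zp_set:
  assumes "p > 0" and "x \<in> zp_set p"
  shows "zp_mul p (zp_of_int p a) x \<in> zp_set p"
  unfolding zp_set_def zp_mul_def zp_of_int_def mem_Collect_eq
proof (intro allI conjI)
  fix k
  have P: "int p ^ k > 0" using assms(1) by simp
  then show "0 \<le> (a mod int p ^ k * x k) mod int p ^ k" "(a mod int p ^ k * x k) mod int p ^ k < int p ^ k"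
    by simp_all
  have dvd: "int p ^ k dvd int p ^ Suc k" by (rule le_imp_power_dvd) simp
  have "x k = x (Suc k) mod int p ^ k" using assms(2) unfolding zp_set_def by blast
  then have "(a mod int p ^ k * x k) mod int p ^ k = (a * x (Suc k)) mod int p ^ k"
    by (simp add: mod_mult_eq)
  also have "\<dots> = (a mod int p ^ Suc k * x (Suc k)) mod int p ^ Suc k mod int p ^ k"
    using dvd by (simp add: mod_mod_cancel mod_mult_left_eq)
  finally show "(a mod int p ^ k * x k) mod int p ^ k =
      (a mod int p ^ Suc k * x (Suc k)) mod int p ^ Suc k mod int p ^ k" .
qed

lemma zpd_scale_in_zpd_set: "p > 0 \<Longrightarrow> x \<in> zpd_set p d \<Longrightarrow> zpd_scale p l x \<in> zpd_set p d"
  using zp_mul_of_int_in_zp_set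
  by (auto simp: zpd_set_def zpd_scale_def zp_mul_def zp_of_int_def fun_eq_iff)

lemma zpd_continuous_scale:
  assumes "p > 0" and "zpd_continuous p d vM f"
  shows "zpd_continuous p d vM (\<lambda>x. f (zpd_scale p l x))"
  unfolding zpd_continuous_def
proof (intro ballI allI)
  fix x C assume x: "x \<in> zpd_set p d"
  obtain n where n: "\<And>y. y \<in> zpd_set p d \<Longrightarrow> (\<forall>i<d. y i n = zpd_scale p l x i n) \<Longrightarrow>
      ereal C \<le> vM (f y - f (zpd_scale p l x))"
    using assms(2) zpd_scale_in_zpd_set[OF assms(1) x] unfolding zpd_continuous_def by blast
  have "ereal C \<le> vM (f (zpd_scale p l y) - f (zpd_scale p l x))"
    if "y \<in> zpd_set p d" "\<forall>i<d. y i n = x i n" for y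
    using that by (intro n zpd_scale_in_zpd_set[OF assms(1)]) (simp_all add: zpd_scale_def zp_mul_def)
  then show "\<exists>n. \<forall>y\<in>zpd_set p d. (\<forall>i<d. y i n = x i n) \<longrightarrow>
      ereal C \<le> vM (f (zpd_scale p l y) - f (zpd_scale p l x))"
    by blast
qed

lemma mahler_coeff_scale_lower_bound:
  assumes "module sm" and "module_valuation vR sm vM"
    and "\<And>j. 0 < j \<Longrightarrow> ereal (K - s * real j) \<le> vR (of_nat (p ^ l choose j))"
    and "\<And>m. m \<in> multi_indices d \<Longrightarrow> ereal (c + s * real (multi_abs d m)) \<le> vM (mahler_coeff p d f m)"
  shows "ereal (c + K * real (multi_abs d n)) \<le> vM (mahler_coeff p d (\<lambda>x. f (zpd_scale p l x)) n)"
proof -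
  define \<phi> where "\<phi> k = f (lattice_point p d k)" for k
  have "mahler_coeff p d (\<lambda>x. f (zpd_scale p l x)) n = multi_iter (fdiff_step (p ^ l)) [0..<d] n \<phi> (\<lambda>_. 0)"
    unfolding mahler_coeff_eq_lattice_coeff zpd_scale_lattice_point \<phi>_def
    using lattice_coeff_scale[of d "\<lambda>k. f (lattice_point p d k)" "p ^ l" n] by simp
  also have "\<dots> = lattice_coeff d (multi_iter (fdiff_step (p ^ l)) [0..<d] n \<phi>) (\<lambda>_. 0)"
    by (simp add: lattice_coeff_def)
  finally have eq: "mahler_coeff p d (\<lambda>x. f (zpd_scale p l x)) n = \<dots>" .
  have "sum_list (map n [0..<d]) = multi_abs d n"
    by (simp add: multi_abs_def sum_list_distinct_conv_sum_set atLeast0LessThan)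
  moreover have "ereal (c + K * real (sum_list (map n [0..<d])) + s * real (multi_abs d (\<lambda>_. 0)))
      \<le> vM (lattice_coeff d (multi_iter (fdiff_step (p ^ l)) [0..<d] n \<phi>) (\<lambda>_. 0))"
    using assms(4) unfolding mahler_coeff_eq_lattice_coeff \<phi>_def
    by (intro lattice_coeff_multi_iter_lower_bound[OF assms(1-3)]) (auto simp: multi_indices_def)
  ultimately show ?thesis unfolding eq by (simp add: multi_abs_def)
qed

theorem corollary2p7:
  fixes p d :: nat
    and valR :: "'r::comm_ring_1 \<Rightarrow> ereal"
    and sm :: "'r \<Rightarrow> 'm::ab_group_add \<Rightarrow> 'm"
    and valM :: "'m \<Rightarrow> ereal"
    and \<iota> :: "(nat \<Rightarrow> int) \<Rightarrow> 'r"
    and lam lam' :: real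
  assumes "prime p"
    and "zp_algebra p \<iota>"
    and "ring_valuation valR"
    and "tate_ring valR"
    and "valR (of_nat p) > 0"
    and "module sm"
    and "module_valuation valR sm valM"
  shows "\<exists>l::nat. \<forall>f \<in> C_an p d valM lam. (\<lambda>x. f (zpd_scale p l x)) \<in> C_an p d valM lam'"
proof -
  have p: "p > 0" using assms(1) prime_gt_0_nat by blast
  define K where "K = real p powr lam' + 1"
  have "real p powr lam > 0" using p by simp
  then obtain l where l: "\<And>j. 0 < j \<Longrightarrow> ereal (K - real p powr lam * real j) \<le> valR (of_nat (p ^ l choose j))"
    using binomial_prime_power_valuation_lower_bound[OF assms(3,1,5)] by blast
  have "(\<lambda>x. f (zpd_scale p l x)) \<in> C_an p d valM lam'" if f: "f \<in> C_an p d valM lam" for f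
  proof -
    obtain c where c: "\<And>m. m \<in> multi_indices d \<Longrightarrow>
        ereal (c + real p powr lam * real (multi_abs d m)) \<le> valM (mahler_coeff p d f m)"
      using C_an_linear_lower_bound[OF _ f] assms(7) unfolding module_valuation_def by blast
    show ?thesis
    proof (rule C_an_if_linear_lower_bound)
      show "zpd_continuous p d valM (\<lambda>x. f (zpd_scale p l x))"
        using zpd_continuous_scale[OF p] f unfolding C_an_def by blast
      show "ereal (c + K * real (multi_abs d n)) \<le> valM (mahler_coeff p d (\<lambda>x. f (zpd_scale p l x)) n)" for n
        by (rule mahler_coeff_scale_lower_bound[OF assms(6,7) l c])
      show "real p powr lam' < K" by (simp add: K_def)
    qed
  qed
  then show ?thesis by blast
qed

end
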